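(* Consider the impulsive system $\dot S=S(A-S)-\beta_0 IS$, $\dot I=\beta_0 IS-(\sigma+g)I$ for $t\neq nT$, $S(nT)=(1-p)S(nT^-)$, $I(nT)=I(nT^-)$, $n\in\mathbb{N}$. For $T>0$: (1) the disease-free trivial solution $(0,0)$ is locally asymptotically stable provided $p>p_1(T)$; (2) the disease-free periodic solution $(\mathcal{S},0)$ is locally asymptotically stable provided $p_2(T)<p<p_1(T)$, where $p_1(T)=1-e^{-AT}$ and $p_2(T)=1-e^{-(A-S_c)T}$.
   Context: Parameters: $A\in(0,1]$, $\beta_0>0$, $\sigma,g\ge0$ with $\sigma+g>0$, $p\in[0,1]$; $S_c=(\sigma+g)/\beta_0$; it is assumed $S(t)\le A$. $\mathcal{S}$ is the $T$-periodic function given for $nT\le t<(n+1)T$ by $\mathcal{S}(t)=\frac{A[e^{AT}(1-p)-1]}{e^{AT}(1-p)-1+pe^{A(T-(t-nT))}}$. Local asymptotic stability of a $T$-periodic solution through $x_0$: for every neighbourhood $V$ of $x_0$ there is a neighbourhood $W\subset V$ with $\varphi(kT,y_0)\in V$ for all $y_0\in W$, $k\in\mathbb{N}$, and there is a neighbourhood $V$ with $\varphi(kT,y_0)\to x_0$ for all $y_0\in V$. *)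

theory Defs
  imports "HOL-Analysis.Analysis"
begin

text \<open>Solutions of the impulsive SI system on [0,\<infinity>):
  S' = S(A - S) - beta0 I S,  I' = beta0 I S - (sigma + g) I  for t \<noteq> nT,
  S(nT) = (1 - p) S(nT^-),  I(nT) = I(nT^-)  for n \<ge> 1.
  Solutions are right-continuous; the value at t = 0 is the initial state.\<close>

definition impulsive_solution ::
  "real \<Rightarrow> real \<Rightarrow> real \<Rightarrow> real \<Rightarrow> real \<Rightarrow> real \<Rightarrow> (real \<Rightarrow> real) \<Rightarrow> (real \<Rightarrow> real) \<Rightarrow> bool" where
  "impulsive_solution A \<beta>0 \<sigma> g p T S I \<longleftrightarrow>
     (\<forall>n::nat. \<forall>t \<in> {real n * T <..< real (Suc n) * T}.
        (S has_real_derivative (S t * (A - S t) - \<beta>0 * I t * S t)) (at t) \<and>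
        (I has_real_derivative (\<beta>0 * I t * S t - (\<sigma> + g) * I t)) (at t)) \<and>
     (\<forall>n::nat. continuous_on {real n * T ..< real (Suc n) * T} S \<and>
               continuous_on {real n * T ..< real (Suc n) * T} I) \<and>
     (\<forall>n::nat. n \<ge> 1 \<longrightarrow>
        (\<exists>L. (S \<longlongrightarrow> L) (at_left (real n * T)) \<and> S (real n * T) = (1 - p) * L) \<and>
        (I \<longlongrightarrow> I (real n * T)) (at_left (real n * T)))"

definition is_trajectory ::
  "real \<Rightarrow> real \<Rightarrow> real \<Rightarrow> real \<Rightarrow> real \<Rightarrow> real \<Rightarrow> real \<times> real \<Rightarrow> (real \<Rightarrow> real \<times> real) \<Rightarrow> bool" where
  "is_trajectory A \<beta>0 \<sigma> g p T y x \<longleftrightarrow>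
     impulsive_solution A \<beta>0 \<sigma> g p T (\<lambda>t. fst (x t)) (\<lambda>t. snd (x t)) \<and> x 0 = y"

definition state_space :: "(real \<times> real) set" where
  "state_space = {(s, i). 0 \<le> s \<and> 0 \<le> i}"

text \<open>Local asymptotic stability of the T-periodic solution through x0, in terms of the
  stroboscopic map \<phi>(kT, y0), neighbourhoods taken relative to the state space.\<close>
definition loc_asym_stable ::
  "real \<Rightarrow> real \<Rightarrow> real \<Rightarrow> real \<Rightarrow> real \<Rightarrow> real \<Rightarrow> real \<times> real \<Rightarrow> bool" where
  "loc_asym_stable A \<beta>0 \<sigma> g p T x0 \<longleftrightarrow>
     (\<forall>V. open V \<and> x0 \<in> V \<longrightarrow>
        (\<exists>W. open W \<and> x0 \<in> W \<and> W \<subseteq> V \<and>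
           (\<forall>y \<in> W \<inter> state_space. \<forall>x. is_trajectory A \<beta>0 \<sigma> g p T y x \<longrightarrow>
              (\<forall>k::nat. x (real k * T) \<in> V)))) \<and>
     (\<exists>V. open V \<and> x0 \<in> V \<and>
        (\<forall>y \<in> V \<inter> state_space. \<forall>x. is_trajectory A \<beta>0 \<sigma> g p T y x \<longrightarrow>
           (\<lambda>k::nat. x (real k * T)) \<longlonglongrightarrow> x0))"

definition Sper :: "real \<Rightarrow> real \<Rightarrow> real \<Rightarrow> real \<Rightarrow> real" where
  "Sper A p T t = (let n = \<lfloor>t / T\<rfloor> in
     A * (exp (A * T) * (1 - p) - 1) /
       (exp (A * T) * (1 - p) - 1 + p * exp (A * (T - (t - real_of_int n * T)))))"

definition Scrit :: "real \<Rightarrow> real \<Rightarrow> real \<Rightarrow> real" where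
  "Scrit \<beta>0 \<sigma> g = (\<sigma> + g) / \<beta>0"

definition p1 :: "real \<Rightarrow> real \<Rightarrow> real" where
  "p1 A T = 1 - exp (- A * T)"

definition p2 :: "real \<Rightarrow> real \<Rightarrow> real \<Rightarrow> real \<Rightarrow> real \<Rightarrow> real" where
  "p2 A \<beta>0 \<sigma> g T = 1 - exp (- (A - Scrit \<beta>0 \<sigma> g) * T)"

end

theory Submission
  imports Defs
begin

text \<open>Between impulses S and I keep their signs and S' \<le> A S. If (1 - p) e^(AT) < 1, that is
  p > p1(T), the values of S at the impulse times therefore decay geometrically, and once
  \<beta>0 S \<le> (\<sigma> + g) / 2 so do those of I.

  Near the periodic solution two quantities are tracked at the impulse times. In u = 1/S the
  flow is affine, u' = 1 - A u + \<beta>0 I u, so without infection one period followed by the impulse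
  is an affine map of slope e^(-AT) / (1 - p), which is < 1 exactly when p < p1(T); the term
  \<beta>0 I u perturbs it by an amount linear in I. The Lyapunov function I S^\<beta>0 decays along the
  flow at least like e^((\<beta>0 A - (\<sigma> + g)) t), and the impulse multiplies it by (1 - p)^\<beta>0, so it
  decays geometrically when p > p2(T). As S stays near the periodic orbit, I decays
  geometrically too, the perturbations of u are summable and u converges to its fixed point.\<close>

lemma gronwall_le:
  fixes f f' :: "real \<Rightarrow> real"
  assumes "a \<le> t" "t \<le> b" and cont: "continuous_on {a..b} f"
    and deriv: "\<And>x. a < x \<Longrightarrow> x < b \<Longrightarrow> (f has_real_derivative f' x) (at x)"
    and le: "\<And>x. a < x \<Longrightarrow> x < b \<Longrightarrow> f' x \<le> k * f x"
  shows "f t \<le> f a * exp (k * (t - a))"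
proof (cases "t = a")
  case True
  then show ?thesis by simp
next
  case False
  with \<open>a \<le> t\<close> have "a < t" by simp
  define h where "h x = f x * exp (- k * (x - a))" for x
  have deriv_h: "(h has_real_derivative (f' x - k * f x) * exp (- k * (x - a))) (at x)"
    if "a < x" "x < b" for x
    unfolding h_def using deriv[OF that] by (auto intro!: derivative_eq_intros simp: algebra_simps)
  have "continuous_on {a..t} h"
    unfolding h_def by (intro continuous_intros continuous_on_subset[OF cont]) (use assms in auto)
  then obtain l z where z: "a < z" "z < t" "DERIV h z :> l" "h t - h a = (t - a) * l"
    using MVT[OF \<open>a < t\<close>] deriv_h \<open>t \<le> b\<close> by (metis less_le_trans real_differentiable_def)
  have "l = (f' z - k * f z) * exp (- k * (z - a))"
    using DERIV_unique[OF z(3) deriv_h] z \<open>t \<le> b\<close> by auto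
  also have "\<dots> \<le> 0" using le[of z] z \<open>t \<le> b\<close> by (simp add: mult_nonpos_nonneg)
  finally have "h t \<le> h a" using z(4) \<open>a < t\<close> by (smt (verit) mult_nonneg_nonpos)
  then have "f t * exp (- k * (t - a)) \<le> f a" by (simp add: h_def)
  then have "f t * exp (- k * (t - a)) * exp (k * (t - a)) \<le> f a * exp (k * (t - a))"
    by (simp add: mult_right_mono)
  then show ?thesis by (simp add: mult.assoc flip: exp_add)
qed

lemma gronwall_ge:
  fixes f f' :: "real \<Rightarrow> real"
  assumes "a \<le> t" "t \<le> b" "continuous_on {a..b} f"
    and "\<And>x. a < x \<Longrightarrow> x < b \<Longrightarrow> (f has_real_derivative f' x) (at x)"
    and "\<And>x. a < x \<Longrightarrow> x < b \<Longrightarrow> k * f x \<le> f' x"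
  shows "f a * exp (k * (t - a)) \<le> f t"
proof -
  have "- f t \<le> - f a * exp (k * (t - a))"
    using gronwall_le[of a t b "\<lambda>x. - f x" "\<lambda>x. - f' x" k] assms
    by (auto intro!: continuous_intros derivative_intros)
  then show ?thesis by simp
qed

lemma linear_ode_square_bounds:
  fixes f c :: "real \<Rightarrow> real"
  assumes "continuous_on {a..b} f" "continuous_on {a..b} c"
    and deriv: "\<And>x. a < x \<Longrightarrow> x < b \<Longrightarrow> (f has_real_derivative c x * f x) (at x)"
  obtains M where "\<And>t. t \<in> {a..b} \<Longrightarrow> (f t)\<^sup>2 \<le> (f a)\<^sup>2 * exp (2 * M * (t - a))"
    and "\<And>t. t \<in> {a..b} \<Longrightarrow> (f a)\<^sup>2 * exp (- 2 * M * (t - a)) \<le> (f t)\<^sup>2"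
proof -
  have "bounded (c ` {a..b})"
    by (intro compact_imp_bounded compact_continuous_image assms) auto
  then obtain M where "\<forall>y\<in>c ` {a..b}. norm y \<le> M" unfolding bounded_iff by blast
  then have M: "\<And>x. x \<in> {a..b} \<Longrightarrow> \<bar>c x\<bar> \<le> M" by auto
  have deriv_sq: "((\<lambda>x. (f x)\<^sup>2) has_real_derivative 2 * c x * (f x)\<^sup>2) (at x)" if "a < x" "x < b" for x
    using deriv[OF that] by (auto intro!: derivative_eq_intros simp: power2_eq_square)
  have cont_sq: "continuous_on {a..b} (\<lambda>x. (f x)\<^sup>2)" by (intro continuous_intros assms)
  show ?thesis
  proof
    fix t assume "t \<in> {a..b}"
    have "2 * c x * (f x)\<^sup>2 \<le> (2 * M) * (f x)\<^sup>2" if "a < x" "x < b" for x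
      using M[of x] that by (intro mult_right_mono) auto
    with \<open>t \<in> {a..b}\<close> show "(f t)\<^sup>2 \<le> (f a)\<^sup>2 * exp (2 * M * (t - a))"
      by (intro gronwall_le[OF _ _ cont_sq deriv_sq]) auto
  next
    fix t assume "t \<in> {a..b}"
    have "(- 2 * M) * (f x)\<^sup>2 \<le> 2 * c x * (f x)\<^sup>2" if "a < x" "x < b" for x
      using M[of x] that by (intro mult_right_mono) auto
    with \<open>t \<in> {a..b}\<close> show "(f a)\<^sup>2 * exp (- 2 * M * (t - a)) \<le> (f t)\<^sup>2"
      by (intro gronwall_ge[OF _ _ cont_sq deriv_sq]) auto
  qed
qed

lemma linear_ode_sign:
  fixes f c :: "real \<Rightarrow> real"
  assumes cont: "continuous_on {a..b} f" "continuous_on {a..b} c"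
    and deriv: "\<And>x. a < x \<Longrightarrow> x < b \<Longrightarrow> (f has_real_derivative c x * f x) (at x)"
    and t: "t \<in> {a..b}"
  shows linear_ode_pos: "0 < f a \<Longrightarrow> 0 < f t"
    and linear_ode_nonneg: "0 \<le> f a \<Longrightarrow> 0 \<le> f t"
proof -
  obtain M where upper: "\<And>t. t \<in> {a..b} \<Longrightarrow> (f t)\<^sup>2 \<le> (f a)\<^sup>2 * exp (2 * M * (t - a))"
    and lower: "\<And>t. t \<in> {a..b} \<Longrightarrow> (f a)\<^sup>2 * exp (- 2 * M * (t - a)) \<le> (f t)\<^sup>2"
    using linear_ode_square_bounds[OF cont deriv] by blast
  have nonzero: "f s \<noteq> 0" if "f a \<noteq> 0" "s \<in> {a..b}" for s
  proof -
    have "0 < (f a)\<^sup>2 * exp (- 2 * M * (s - a))" using that(1) by simp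
    then show ?thesis using lower[OF that(2)] by auto
  qed
  show pos: "0 < f t" if fa: "0 < f a"
  proof (rule ccontr)
    assume "\<not> 0 < f t"
    moreover have "continuous_on {a..t} f" by (rule continuous_on_subset[OF cont(1)]) (use t in auto)
    ultimately obtain z where "a \<le> z" "z \<le> t" "f z = 0"
      using IVT2'[of f t 0 a] less_imp_le[OF fa] t by auto
    then show False using nonzero[of z] fa t by auto
  qed
  show "0 \<le> f t" if "0 \<le> f a"
  proof (cases "f a = 0")
    case True
    then show ?thesis using upper[OF t] by simp
  next
    case False
    then show ?thesis using pos that by (simp add: less_imp_le)
  qed
qed

lemma continuous_on_Icc_extend_at_left:
  fixes f :: "real \<Rightarrow> real"
  assumes "a < b" "continuous_on {a..<b} f" "(f \<longlongrightarrow> L) (at_left b)"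
  shows "continuous_on {a..b} (\<lambda>t. if t = b then L else f t)"
proof (rule continuous_on_IccI[OF _ _ _ assms(1)])
  obtain c where c: "a < c" "c < b" using assms(1) dense by blast
  have "continuous_on {a..c} f" by (rule continuous_on_subset[OF assms(2)]) (use c in auto)
  then have "(f \<longlongrightarrow> f a) (at_right a)" using continuous_on_Icc_at_rightD c by blast
  moreover have "eventually (\<lambda>t. f t = (if t = b then L else f t)) (at_right a)"
    unfolding eventually_at_right_field using assms(1) by (intro exI[of _ b]) auto
  ultimately show "((\<lambda>t. if t = b then L else f t) \<longlongrightarrow> (if a = b then L else f a)) (at_right a)"
    using assms(1) Lim_transform_eventually by fastforce
next
  have "eventually (\<lambda>t. f t = (if t = b then L else f t)) (at_left b)"
    by (simp add: eventually_at_filter)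
  then show "((\<lambda>t. if t = b then L else f t) \<longlongrightarrow> (if b = b then L else f b)) (at_left b)"
    using assms(3) Lim_transform_eventually by fastforce
next
  fix x assume x: "a < x" "x < b"
  have "continuous_on {a<..<b} f" by (rule continuous_on_subset[OF assms(2)]) auto
  then have "(f \<longlongrightarrow> f x) (at x within {a<..<b})" using x by (simp add: continuous_on_def)
  then have "(f \<longlongrightarrow> f x) (at x)" using at_within_open[of x "{a<..<b}"] x by simp
  moreover have "eventually (\<lambda>t. f t = (if t = b then L else f t)) (at x)"
    using order_tendstoD(2)[OF tendsto_ident_at x(2)] by (rule eventually_mono) auto
  ultimately show "((\<lambda>t. if t = b then L else f t) \<longlongrightarrow> (if x = b then L else f x)) (at x)"
    using x Lim_transform_eventually by fastforce
qed

lemma norm_Pair_mono: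
  fixes a b a' b' :: real
  assumes "0 \<le> a" "a \<le> a'" "0 \<le> b" "b \<le> b'"
  shows "norm (a, b) \<le> norm (a', b')"
  unfolding norm_Pair using assms by (auto intro!: real_sqrt_le_mono add_mono power_mono)

lemma dist_origin: "dist z (0, 0) = norm (z :: real \<times> real)"
  by (simp add: dist_norm zero_prod_def[symmetric])

lemma dist_Pair_le_sum_abs:
  fixes a b c d :: real
  shows "dist (a, b) (c, d) \<le> \<bar>a - c\<bar> + \<bar>b - d\<bar>"
  unfolding dist_Pair_Pair dist_real_def using sqrt_sum_squares_le_sum_abs by simp

lemma inverse_close_bounds:
  fixes s u :: real
  assumes "0 < s" "0 < u" "\<bar>1 / s - u\<bar> \<le> u / 2"
  shows "2 / (3 * u) \<le> s" "s \<le> 2 / u" "1 / s \<le> 3 * u / 2"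
proof -
  have "u / 2 \<le> 1 / s" "1 / s \<le> 3 * u / 2"
    using abs_le_D1[OF assms(3)] abs_le_D2[OF assms(3)] by linarith+
  then show "2 / (3 * u) \<le> s" "s \<le> 2 / u" "1 / s \<le> 3 * u / 2"
    using assms(1,2) by (simp_all add: field_simps)
qed

lemma abs_inverse_diff_le:
  fixes a b :: real
  assumes "0 < b" "b / 2 \<le> a"
  shows "\<bar>1 / a - 1 / b\<bar> \<le> 2 * \<bar>a - b\<bar> / b\<^sup>2"
proof -
  have "0 < a" using assms by simp
  then have "\<bar>1 / a - 1 / b\<bar> = \<bar>a - b\<bar> / (a * b)" using assms(1)
    by (simp add: field_simps abs_div abs_mult abs_minus_commute)
  also have "\<dots> \<le> \<bar>a - b\<bar> / (b / 2 * b)"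
    using assms \<open>0 < a\<close> by (intro divide_left_mono mult_right_mono) auto
  also have "\<dots> = 2 * \<bar>a - b\<bar> / b\<^sup>2" by (simp add: power2_eq_square)
  finally show ?thesis .
qed

lemma abs_le_of_perturbed_contraction:
  fixes c e e' d K m r :: real
  assumes "0 \<le> c" "c * e \<le> e'" "e' \<le> c * e + d" "\<bar>e\<bar> \<le> K * m" "d \<le> K * (r - c) * m" "0 \<le> m"
  shows "\<bar>e'\<bar> \<le> K * m * r"
proof -
  have "c * e \<le> c * \<bar>e\<bar>" "c * (- \<bar>e\<bar>) \<le> c * e" using assms(1) by (intro mult_left_mono; simp)+
  then have "\<bar>e'\<bar> \<le> c * \<bar>e\<bar> + d" using assms(2,3) by (auto simp: abs_le_iff)
  moreover have "c * \<bar>e\<bar> \<le> c * (K * m)" using assms by (intro mult_left_mono) auto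
  moreover have "c * (K * m) + K * (r - c) * m = K * m * r" by (simp add: algebra_simps)
  ultimately show ?thesis using assms(5) by linarith
qed

locale SI_flow =
  fixes A \<beta>0 \<sigma> g :: real and S I :: "real \<Rightarrow> real" and a b :: real
  assumes a_less_b: "a < b"
    and A_pos: "0 < A" and \<beta>0_pos: "0 < \<beta>0" and removal_nonneg: "0 \<le> \<sigma> + g"
    and cont_S: "continuous_on {a..b} S" and cont_I: "continuous_on {a..b} I"
    and deriv_S: "\<And>t. a < t \<Longrightarrow> t < b \<Longrightarrow>
      (S has_real_derivative S t * (A - S t) - \<beta>0 * I t * S t) (at t)"
    and deriv_I: "\<And>t. a < t \<Longrightarrow> t < b \<Longrightarrow>
      (I has_real_derivative \<beta>0 * I t * S t - (\<sigma> + g) * I t) (at t)"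
begin

lemma right_end: "b \<in> {a..b}"
  using a_less_b by simp

lemma deriv_S_linear: "a < t \<Longrightarrow> t < b \<Longrightarrow> (S has_real_derivative (A - S t - \<beta>0 * I t) * S t) (at t)"
  by (rule DERIV_cong[OF deriv_S]) (auto simp: algebra_simps)

lemma deriv_I_linear: "a < t \<Longrightarrow> t < b \<Longrightarrow> (I has_real_derivative (\<beta>0 * S t - (\<sigma> + g)) * I t) (at t)"
  by (rule DERIV_cong[OF deriv_I]) (auto simp: algebra_simps)

lemma S_pos: "0 < S a \<Longrightarrow> t \<in> {a..b} \<Longrightarrow> 0 < S t"
  by (rule linear_ode_pos[OF cont_S _ deriv_S_linear]) (auto intro!: continuous_intros cont_S cont_I)

lemma S_nonneg: "0 \<le> S a \<Longrightarrow> t \<in> {a..b} \<Longrightarrow> 0 \<le> S t"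
  by (rule linear_ode_nonneg[OF cont_S _ deriv_S_linear]) (auto intro!: continuous_intros cont_S cont_I)

lemma I_nonneg: "0 \<le> I a \<Longrightarrow> t \<in> {a..b} \<Longrightarrow> 0 \<le> I t"
  by (rule linear_ode_nonneg[OF cont_I _ deriv_I_linear]) (auto intro!: continuous_intros cont_S cont_I)

lemma S_le_exp_growth:
  assumes "0 \<le> S a" "0 \<le> I a" "t \<in> {a..b}"
  shows "S t \<le> S a * exp (A * (t - a))"
proof (rule gronwall_le[OF _ _ cont_S deriv_S])
  fix x assume x: "a < x" "x < b"
  have "0 \<le> S x" "0 \<le> I x" using S_nonneg I_nonneg assms x by auto
  then show "S x * (A - S x) - \<beta>0 * I x * S x \<le> A * S x"
    using \<beta>0_pos by (simp add: algebra_simps)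
qed (use assms in auto)

lemma I_le_exp_decay:
  assumes "0 \<le> S a" "0 \<le> I a" "t \<in> {a..b}"
    and small: "\<beta>0 * S a * exp (A * (b - a)) \<le> (\<sigma> + g) / 2"
  shows "I t \<le> I a * exp (- ((\<sigma> + g) / 2) * (t - a))"
proof (rule gronwall_le[OF _ _ cont_I deriv_I])
  fix x assume x: "a < x" "x < b"
  have "0 \<le> I x" using I_nonneg assms x by auto
  have "S x \<le> S a * exp (A * (x - a))" using S_le_exp_growth assms x by auto
  also have "\<dots> \<le> S a * exp (A * (b - a))" using assms x A_pos by (intro mult_left_mono) auto
  finally have "\<beta>0 * S x \<le> (\<sigma> + g) / 2"
    using small \<beta>0_pos by (smt (verit, best) mult_left_mono mult.assoc)
  then have "(\<beta>0 * S x - (\<sigma> + g)) * I x \<le> (- ((\<sigma> + g) / 2)) * I x"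
    using \<open>0 \<le> I x\<close> by (intro mult_right_mono) (auto simp: field_simps)
  then show "\<beta>0 * I x * S x - (\<sigma> + g) * I x \<le> - ((\<sigma> + g) / 2) * I x"
    by (simp add: algebra_simps)
qed (use assms in auto)

lemma deriv_inv_S:
  assumes "0 < S a" "a < x" "x < b"
  shows "((\<lambda>t. 1 / S t - c) has_real_derivative 1 - A / S x + \<beta>0 * I x / S x) (at x)"
proof -
  have "0 < S x" using S_pos assms by auto
  with deriv_S[OF assms(2,3)] show ?thesis
    by (auto intro!: derivative_eq_intros simp: field_simps power2_eq_square)
qed

lemma cont_inv_S: "0 < S a \<Longrightarrow> continuous_on {a..b} (\<lambda>t. 1 / S t - c)"
  by (intro continuous_intros cont_S) (use S_pos in force)

lemma inv_S_lower:
  assumes "0 < S a" "0 \<le> I a" "t \<in> {a..b}"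
  shows "(1 / S a - 1 / A) * exp (- A * (t - a)) \<le> 1 / S t - 1 / A"
proof (rule gronwall_ge[OF _ _ cont_inv_S[OF assms(1)] deriv_inv_S[OF assms(1)]])
  fix x assume x: "a < x" "x < b"
  have "0 < S x" "0 \<le> I x" using S_pos I_nonneg assms x by auto
  then have "0 \<le> \<beta>0 * I x / S x" using \<beta>0_pos by simp
  then show "- A * (1 / S x - 1 / A) \<le> 1 - A / S x + \<beta>0 * I x / S x"
    using A_pos by (simp add: field_simps)
qed (use assms in auto)

lemma S_le_max:
  assumes "0 < S a" "0 \<le> I a" "t \<in> {a..b}"
  shows "S t \<le> max A (S a)"
proof -
  have "0 < S t" using S_pos assms by auto
  have e: "exp (- A * (t - a)) \<le> 1" using A_pos assms by auto
  note lower = inv_S_lower[OF assms]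
  show ?thesis
  proof (cases "0 \<le> 1 / S a - 1 / A")
    case True
    then have "0 \<le> 1 / S t - 1 / A" using lower by (smt (verit) exp_gt_zero mult_nonneg_nonneg)
    then have "S t \<le> A" using \<open>0 < S t\<close> A_pos by (simp add: field_simps)
    then show ?thesis by simp
  next
    case False
    then have "1 / S a - 1 / A \<le> (1 / S a - 1 / A) * exp (- A * (t - a))"
      using e by (smt (verit) mult_le_cancel_left1)
    then have "1 / S a \<le> 1 / S t" using lower by simp
    then have "S t \<le> S a" using \<open>0 < S t\<close> assms(1) by (simp add: field_simps)
    then show ?thesis by simp
  qed
qed

lemma I_le_exp_growth:
  assumes "0 < S a" "0 \<le> I a" "t \<in> {a..b}"
  shows "I t \<le> I a * exp (\<beta>0 * max A (S a) * (t - a))"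
proof (rule gronwall_le[OF _ _ cont_I deriv_I])
  fix x assume x: "a < x" "x < b"
  have "0 \<le> I x" using I_nonneg assms x by auto
  have "S x \<le> max A (S a)" using S_le_max assms x by auto
  then have "\<beta>0 * S x - (\<sigma> + g) \<le> \<beta>0 * max A (S a)"
    using \<beta>0_pos removal_nonneg by (smt (verit) mult_left_mono)
  then have "(\<beta>0 * S x - (\<sigma> + g)) * I x \<le> (\<beta>0 * max A (S a)) * I x"
    using \<open>0 \<le> I x\<close> by (rule mult_right_mono)
  then show "\<beta>0 * I x * S x - (\<sigma> + g) * I x \<le> \<beta>0 * max A (S a) * I x"
    by (simp add: algebra_simps)
qed (use assms in auto)

text \<open>The Lyapunov function I S^\<beta>0: the logistic terms cancel in its logarithmic derivative
  \<beta>0 A - (\<sigma> + g) - \<beta>0^2 I.\<close>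

lemma lyapunov_le:
  assumes "0 < S a" "0 \<le> I a"
  shows "I b * S b powr \<beta>0 \<le> I a * S a powr \<beta>0 * exp ((\<beta>0 * A - (\<sigma> + g)) * (b - a))"
proof (rule gronwall_le[of a b b "\<lambda>t. I t * S t powr \<beta>0" _ "\<beta>0 * A - (\<sigma> + g)"])
  show "continuous_on {a..b} (\<lambda>t. I t * S t powr \<beta>0)"
    by (intro continuous_intros cont_S cont_I) (use S_pos assms in force)
  fix x assume x: "a < x" "x < b"
  have "0 < S x" "0 \<le> I x" using S_pos I_nonneg assms x by auto
  have "S x powr (\<beta>0 - 1) = S x powr \<beta>0 / S x" using \<open>0 < S x\<close> by (simp add: powr_diff)
  with deriv_S[OF x] deriv_I[OF x] \<open>0 < S x\<close>
  show "((\<lambda>t. I t * S t powr \<beta>0) has_real_derivative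
      (\<beta>0 * A - (\<sigma> + g) - \<beta>0 * \<beta>0 * I x) * (I x * S x powr \<beta>0)) (at x)"
    by (auto intro!: derivative_eq_intros simp: field_simps)
  have "0 \<le> \<beta>0 * \<beta>0 * I x * (I x * S x powr \<beta>0)" using \<open>0 \<le> I x\<close> by simp
  then show "(\<beta>0 * A - (\<sigma> + g) - \<beta>0 * \<beta>0 * I x) * (I x * S x powr \<beta>0)
      \<le> (\<beta>0 * A - (\<sigma> + g)) * (I x * S x powr \<beta>0)" by (simp add: algebra_simps)
qed (use a_less_b in auto)

lemma inv_S_le_max:
  assumes "0 < S a" "0 \<le> I a" and small: "\<And>t. t \<in> {a..b} \<Longrightarrow> \<beta>0 * I t \<le> A / 2"
    and "t \<in> {a..b}"
  shows "1 / S t \<le> max (1 / S a) (2 / A)"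
proof -
  have "1 / S t - 2 / A \<le> (1 / S a - 2 / A) * exp (- (A / 2) * (t - a))"
  proof (rule gronwall_le[OF _ _ cont_inv_S[OF assms(1)] deriv_inv_S[OF assms(1)]])
    fix x assume x: "a < x" "x < b"
    have "0 < S x" using S_pos assms x by auto
    have "\<beta>0 * I x / S x \<le> (A / 2) / S x"
      using small[of x] x \<open>0 < S x\<close> by (intro divide_right_mono) auto
    then show "1 - A / S x + \<beta>0 * I x / S x \<le> - (A / 2) * (1 / S x - 2 / A)"
      using A_pos \<open>0 < S x\<close> by (simp add: field_simps)
  qed (use assms in auto)
  moreover have "(1 / S a - 2 / A) * exp (- (A / 2) * (t - a)) \<le> max (1 / S a - 2 / A) 0"
  proof (cases "0 \<le> 1 / S a - 2 / A")
    case True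
    have "exp (- (A / 2) * (t - a)) \<le> 1" using A_pos assms by auto
    with True show ?thesis by (simp add: mult_left_le)
  next
    case False
    then show ?thesis by (simp add: mult_nonpos_nonneg)
  qed
  ultimately show ?thesis by linarith
qed

lemma inv_S_upper:
  assumes "0 < S a" "0 \<le> I a" "0 \<le> Imax"
    and bounds: "\<And>t. t \<in> {a..b} \<Longrightarrow> I t \<le> Imax \<and> 1 / S t \<le> Umax"
  shows "1 / S b - 1 / A \<le> (1 / S a - 1 / A) * exp (- A * (b - a)) + \<beta>0 * Imax * Umax / A"
proof -
  define d where "d = \<beta>0 * Imax * Umax / A"
  have "1 / S b - (1 / A + d) \<le> (1 / S a - (1 / A + d)) * exp (- A * (b - a))"
  proof (rule gronwall_le[OF _ _ cont_inv_S[OF assms(1)] deriv_inv_S[OF assms(1)]])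
    fix x assume x: "a < x" "x < b"
    have "0 < S x" "0 \<le> I x" using S_pos I_nonneg assms x by auto
    then have "I x * (1 / S x) \<le> Imax * Umax" using bounds[of x] x by (intro mult_mono) auto
    then have "\<beta>0 * (I x * (1 / S x)) \<le> \<beta>0 * (Imax * Umax)"
      using \<beta>0_pos by (intro mult_left_mono) auto
    then have "\<beta>0 * I x / S x \<le> \<beta>0 * Imax * Umax" by (simp add: mult.assoc)
    moreover have "- A * (1 / S x - (1 / A + d)) = 1 - A / S x + \<beta>0 * Imax * Umax"
      using A_pos by (simp add: d_def field_simps)
    ultimately show "1 - A / S x + \<beta>0 * I x / S x \<le> - A * (1 / S x - (1 / A + d))" by linarith
  qed (use a_less_b in auto)
  moreover have "0 \<le> d"
  proof -
    have "1 / S a \<le> Umax" using bounds[of a] a_less_b by auto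
    then have "0 \<le> Umax" using assms(1) by (smt (verit) divide_pos_pos)
    then show ?thesis using A_pos \<beta>0_pos assms(3) by (simp add: d_def)
  qed
  ultimately have "1 / S b - 1 / A \<le> (1 / S a - 1 / A) * exp (- A * (b - a)) + d - d * exp (- A * (b - a))"
    by (simp add: algebra_simps)
  moreover have "0 \<le> d * exp (- A * (b - a))" using \<open>0 \<le> d\<close> by simp
  ultimately show ?thesis unfolding d_def by linarith
qed

lemma inv_S_upper_if_I_small:
  assumes "0 < S a" "0 \<le> I a"
    and small: "\<beta>0 * (I a * exp (\<beta>0 * max A (S a) * (b - a))) \<le> A / 2"
  shows "1 / S b - 1 / A \<le> (1 / S a - 1 / A) * exp (- A * (b - a))
    + \<beta>0 * (I a * exp (\<beta>0 * max A (S a) * (b - a))) * max (1 / S a) (2 / A) / A"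
proof -
  define Imax where "Imax = I a * exp (\<beta>0 * max A (S a) * (b - a))"
  have I_le: "I t \<le> Imax" if "t \<in> {a..b}" for t
  proof -
    have "I t \<le> I a * exp (\<beta>0 * max A (S a) * (t - a))" using I_le_exp_growth assms that by blast
    also have "\<dots> \<le> Imax"
    proof -
      have "\<beta>0 * max A (S a) * (t - a) \<le> \<beta>0 * max A (S a) * (b - a)"
        using that \<beta>0_pos A_pos by (intro mult_left_mono) auto
      then show ?thesis unfolding Imax_def using assms(2) by (intro mult_left_mono) auto
    qed
    finally show ?thesis .
  qed
  have "\<beta>0 * I t \<le> A / 2" if "t \<in> {a..b}" for t
    using I_le[OF that] small \<beta>0_pos unfolding Imax_def by (smt (verit) mult_left_mono)
  then have "1 / S t \<le> max (1 / S a) (2 / A)" if "t \<in> {a..b}" for t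
    using inv_S_le_max[OF assms(1,2)] that by blast
  moreover have "0 \<le> Imax" unfolding Imax_def using assms(2) by simp
  ultimately show ?thesis using inv_S_upper[OF assms(1,2)] I_le unfolding Imax_def by blast
qed

end

locale SI_params =
  fixes A \<beta>0 \<sigma> g p T :: real
  assumes A_pos: "0 < A" and \<beta>0_pos: "0 < \<beta>0" and removal_nonneg: "0 \<le> \<sigma> + g"
    and p_le_1: "p \<le> 1" and T_pos: "0 < T"

locale SI_trajectory = SI_params +
  fixes y :: "real \<times> real" and x :: "real \<Rightarrow> real \<times> real"
  assumes trajectory: "is_trajectory A \<beta>0 \<sigma> g p T y x" and initial_state: "y \<in> state_space"
begin

abbreviation S_at :: "nat \<Rightarrow> real" where "S_at n \<equiv> fst (x (real n * T))"
abbreviation I_at :: "nat \<Rightarrow> real" where "I_at n \<equiv> snd (x (real n * T))"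

lemma initial: "x 0 = y"
  using trajectory by (simp add: is_trajectory_def)

lemma initial_nonneg: "0 \<le> fst y" "0 \<le> snd y"
  using initial_state by (auto simp: state_space_def)

lemma period_length: "real (Suc n) * T - real n * T = T"
  by (simp add: algebra_simps)

text \<open>Solutions are right-continuous, so the impulse-free flow on a period is the solution with its
  value at the right end replaced by the left limit L.\<close>

lemma flow_on_period:
  obtains S' L where "SI_flow A \<beta>0 \<sigma> g S' (\<lambda>t. snd (x t)) (real n * T) (real (Suc n) * T)"
    and "S' (real n * T) = S_at n" and "S' (real (Suc n) * T) = L" and "S_at (Suc n) = (1 - p) * L"
proof -
  define a b where "a = real n * T" and "b = real (Suc n) * T"
  have "a < b" using T_pos by (simp add: a_def b_def)
  note sol = trajectory[unfolded is_trajectory_def impulsive_solution_def]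
  obtain L where L: "((\<lambda>t. fst (x t)) \<longlongrightarrow> L) (at_left b)" "fst (x b) = (1 - p) * L"
    and I_lim: "((\<lambda>t. snd (x t)) \<longlongrightarrow> snd (x b)) (at_left b)"
    using sol[THEN conjunct1, THEN conjunct2, THEN conjunct2, rule_format, of "Suc n"]
    unfolding b_def by auto
  have cont: "continuous_on {a..<b} (\<lambda>t. fst (x t))" "continuous_on {a..<b} (\<lambda>t. snd (x t))"
    using sol[THEN conjunct1, THEN conjunct2, THEN conjunct1, rule_format, of n]
    unfolding a_def b_def by auto
  define S' where "S' t = (if t = b then L else fst (x t))" for t
  have "continuous_on {a..b} S'"
    unfolding S'_def by (rule continuous_on_Icc_extend_at_left[OF \<open>a < b\<close> cont(1) L(1)])
  moreover have "continuous_on {a..b} (\<lambda>t. snd (x t))"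
  proof -
    have eq: "(\<lambda>t. if t = b then snd (x b) else snd (x t)) = (\<lambda>t. snd (x t))" by auto
    show ?thesis using continuous_on_Icc_extend_at_left[OF \<open>a < b\<close> cont(2) I_lim] unfolding eq .
  qed
  moreover have deriv:
    "((\<lambda>t. fst (x t)) has_real_derivative fst (x t) * (A - fst (x t)) - \<beta>0 * snd (x t) * fst (x t)) (at t)"
    "((\<lambda>t. snd (x t)) has_real_derivative \<beta>0 * snd (x t) * fst (x t) - (\<sigma> + g) * snd (x t)) (at t)"
    if "a < t" "t < b" for t
    using spec[OF sol[THEN conjunct1, THEN conjunct1], of n] that unfolding a_def b_def by auto
  moreover have "(S' has_real_derivative S' t * (A - S' t) - \<beta>0 * snd (x t) * S' t) (at t)"
    if t: "a < t" "t < b" for t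
  proof -
    have eq: "\<And>z. z \<in> {a<..<b} \<Longrightarrow> fst (x z) = S' z" by (simp add: S'_def)
    have "(S' has_real_derivative fst (x t) * (A - fst (x t)) - \<beta>0 * snd (x t) * fst (x t)) (at t)"
      by (rule has_field_derivative_transform_within_open[OF deriv(1)[OF t] open_greaterThanLessThan _ eq])
        (use t in auto)
    moreover have "S' t = fst (x t)" using t by (simp add: S'_def)
    ultimately show ?thesis by simp
  qed
  ultimately have "SI_flow A \<beta>0 \<sigma> g S' (\<lambda>t. snd (x t)) a b"
    using \<open>a < b\<close> A_pos \<beta>0_pos removal_nonneg by unfold_locales (auto simp: S'_def)
  moreover have "S' a = fst (x a)" "S' b = L" using \<open>a < b\<close> by (simp_all add: S'_def)
  ultimately show ?thesis using that L(2) unfolding a_def b_def by blast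
qed

lemma state_nonneg: "0 \<le> S_at n \<and> 0 \<le> I_at n"
proof (induction n)
  case 0
  then show ?case using initial_nonneg by (simp add: initial)
next
  case (Suc n)
  obtain S' L where F: "SI_flow A \<beta>0 \<sigma> g S' (\<lambda>t. snd (x t)) (real n * T) (real (Suc n) * T)"
    and S'_start: "S' (real n * T) = S_at n" and S'_end: "S' (real (Suc n) * T) = L"
    and jump: "S_at (Suc n) = (1 - p) * L"
    by (rule flow_on_period)
  interpret F: SI_flow A \<beta>0 \<sigma> g S' "\<lambda>t. snd (x t)" "real n * T" "real (Suc n) * T" by (rule F)
  have "0 \<le> L" using F.S_nonneg[OF _ F.right_end] Suc S'_start S'_end by simp
  moreover have "0 \<le> I_at (Suc n)" using F.I_nonneg[OF _ F.right_end] Suc by simp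
  ultimately show ?case using jump p_le_1 by simp
qed

lemma S_at_Suc_le: "S_at (Suc n) \<le> (1 - p) * exp (A * T) * S_at n"
proof -
  obtain S' L where F: "SI_flow A \<beta>0 \<sigma> g S' (\<lambda>t. snd (x t)) (real n * T) (real (Suc n) * T)"
    and S'_start: "S' (real n * T) = S_at n" and S'_end: "S' (real (Suc n) * T) = L"
    and jump: "S_at (Suc n) = (1 - p) * L"
    by (rule flow_on_period)
  interpret F: SI_flow A \<beta>0 \<sigma> g S' "\<lambda>t. snd (x t)" "real n * T" "real (Suc n) * T" by (rule F)
  have "L \<le> S_at n * exp (A * T)"
    using F.S_le_exp_growth[OF _ _ F.right_end] state_nonneg[of n] S'_start S'_end period_length[of n]
    by simp
  then have "(1 - p) * L \<le> (1 - p) * (S_at n * exp (A * T))"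
    using p_le_1 by (intro mult_left_mono) auto
  then show ?thesis using jump by (simp add: mult_ac)
qed

lemma I_at_Suc_le:
  assumes "\<beta>0 * S_at n * exp (A * T) \<le> (\<sigma> + g) / 2"
  shows "I_at (Suc n) \<le> exp (- ((\<sigma> + g) / 2) * T) * I_at n"
proof -
  obtain S' L where F: "SI_flow A \<beta>0 \<sigma> g S' (\<lambda>t. snd (x t)) (real n * T) (real (Suc n) * T)"
    and S'_start: "S' (real n * T) = S_at n"
    by (rule flow_on_period)
  interpret F: SI_flow A \<beta>0 \<sigma> g S' "\<lambda>t. snd (x t)" "real n * T" "real (Suc n) * T" by (rule F)
  show ?thesis
    using F.I_le_exp_decay[OF _ _ F.right_end] state_nonneg[of n] S'_start period_length[of n] assms
    by (simp add: mult.commute)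
qed

lemma S_at_pos:
  assumes "p < 1" "0 < fst y"
  shows "0 < S_at n"
proof (induction n)
  case 0
  then show ?case using assms(2) by (simp add: initial)
next
  case (Suc n)
  obtain S' L where F: "SI_flow A \<beta>0 \<sigma> g S' (\<lambda>t. snd (x t)) (real n * T) (real (Suc n) * T)"
    and S'_start: "S' (real n * T) = S_at n" and S'_end: "S' (real (Suc n) * T) = L"
    and jump: "S_at (Suc n) = (1 - p) * L"
    by (rule flow_on_period)
  interpret F: SI_flow A \<beta>0 \<sigma> g S' "\<lambda>t. snd (x t)" "real n * T" "real (Suc n) * T" by (rule F)
  have "0 < L" using F.S_pos[OF _ F.right_end] Suc S'_start S'_end period_length[of n] by simp
  then show ?case using jump assms(1) by simp
qed

lemma lyapunov_step:
  assumes "p < 1" "0 < S_at n"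
  shows "I_at (Suc n) * S_at (Suc n) powr \<beta>0
    \<le> (1 - p) powr \<beta>0 * exp ((\<beta>0 * A - (\<sigma> + g)) * T) * (I_at n * S_at n powr \<beta>0)"
proof -
  obtain S' L where F: "SI_flow A \<beta>0 \<sigma> g S' (\<lambda>t. snd (x t)) (real n * T) (real (Suc n) * T)"
    and S'_start: "S' (real n * T) = S_at n" and S'_end: "S' (real (Suc n) * T) = L"
    and jump: "S_at (Suc n) = (1 - p) * L"
    by (rule flow_on_period)
  interpret F: SI_flow A \<beta>0 \<sigma> g S' "\<lambda>t. snd (x t)" "real n * T" "real (Suc n) * T" by (rule F)
  have "0 < L" using F.S_pos[OF _ F.right_end] assms S'_start S'_end period_length[of n] by simp
  have "I_at (Suc n) * S_at (Suc n) powr \<beta>0 = (1 - p) powr \<beta>0 * (I_at (Suc n) * L powr \<beta>0)"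
    using jump \<open>0 < L\<close> assms(1) by (simp add: powr_mult)
  also have "\<dots> \<le> (1 - p) powr \<beta>0 * (I_at n * S_at n powr \<beta>0 * exp ((\<beta>0 * A - (\<sigma> + g)) * T))"
    using F.lyapunov_le state_nonneg[of n] assms S'_start S'_end period_length[of n]
    by (intro mult_left_mono) auto
  finally show ?thesis by (simp add: mult_ac)
qed

lemma inv_S_at_Suc_bounds:
  assumes "p < 1" "0 < S_at n"
  shows "(1 / S_at n - 1 / A) * exp (- A * T) \<le> (1 - p) / S_at (Suc n) - 1 / A"
    and "\<beta>0 * (I_at n * exp (\<beta>0 * max A (S_at n) * T)) \<le> A / 2 \<Longrightarrow>
      (1 - p) / S_at (Suc n) - 1 / A \<le> (1 / S_at n - 1 / A) * exp (- A * T)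
        + \<beta>0 * (I_at n * exp (\<beta>0 * max A (S_at n) * T)) * max (1 / S_at n) (2 / A) / A"
proof -
  obtain S' L where F: "SI_flow A \<beta>0 \<sigma> g S' (\<lambda>t. snd (x t)) (real n * T) (real (Suc n) * T)"
    and S'_start: "S' (real n * T) = S_at n" and S'_end: "S' (real (Suc n) * T) = L"
    and jump: "S_at (Suc n) = (1 - p) * L"
    by (rule flow_on_period)
  interpret F: SI_flow A \<beta>0 \<sigma> g S' "\<lambda>t. snd (x t)" "real n * T" "real (Suc n) * T" by (rule F)
  have "0 < L" using F.S_pos[OF _ F.right_end] assms S'_start S'_end period_length[of n] by simp
  then have inv_L: "(1 - p) / S_at (Suc n) = 1 / L" using jump assms(1) by simp
  show "(1 / S_at n - 1 / A) * exp (- A * T) \<le> (1 - p) / S_at (Suc n) - 1 / A"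
    using F.inv_S_lower[OF _ _ F.right_end] state_nonneg[of n] assms S'_start S'_end period_length[of n]
    unfolding inv_L by simp
  show "(1 - p) / S_at (Suc n) - 1 / A \<le> (1 / S_at n - 1 / A) * exp (- A * T)
      + \<beta>0 * (I_at n * exp (\<beta>0 * max A (S_at n) * T)) * max (1 / S_at n) (2 / A) / A"
    if "\<beta>0 * (I_at n * exp (\<beta>0 * max A (S_at n) * T)) \<le> A / 2"
    using F.inv_S_upper_if_I_small state_nonneg[of n] assms that S'_start S'_end period_length[of n]
    unfolding inv_L by simp
qed

lemma geometric_decay_to_trivial:
  assumes q: "(1 - p) * exp (A * T) \<le> 1"
    and small: "\<beta>0 * fst y * exp (A * T) \<le> (\<sigma> + g) / 2"
  shows "S_at n \<le> ((1 - p) * exp (A * T)) ^ n * fst y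
    \<and> I_at n \<le> exp (- ((\<sigma> + g) / 2) * T) ^ n * snd y"
proof (induction n)
  case 0
  then show ?case by (simp add: initial)
next
  case (Suc n)
  let ?q = "(1 - p) * exp (A * T)" and ?r = "exp (- ((\<sigma> + g) / 2) * T)"
  have "0 \<le> ?q" using p_le_1 by simp
  have "?q ^ n * fst y \<le> fst y"
    using \<open>0 \<le> ?q\<close> q initial_nonneg(1) by (simp add: mult_left_le_one_le power_le_one)
  then have "\<beta>0 * S_at n * exp (A * T) \<le> \<beta>0 * fst y * exp (A * T)"
    using Suc.IH \<beta>0_pos by (intro mult_right_mono mult_left_mono) auto
  then have "I_at (Suc n) \<le> ?r * I_at n" using I_at_Suc_le small by simp
  also have "\<dots> \<le> ?r * (?r ^ n * snd y)" using Suc.IH by (intro mult_left_mono) auto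
  finally have "I_at (Suc n) \<le> ?r ^ Suc n * snd y" by (simp add: mult.assoc)
  moreover have "S_at (Suc n) \<le> ?q * S_at n" by (rule S_at_Suc_le)
  moreover have "?q * S_at n \<le> ?q * (?q ^ n * fst y)"
    using Suc.IH \<open>0 \<le> ?q\<close> by (intro mult_left_mono) auto
  ultimately show ?case by (simp add: mult.assoc)
qed

end

lemma loc_asym_stableI:
  assumes "0 < \<delta>"
    and bound: "\<And>y x k. y \<in> state_space \<Longrightarrow> dist y x0 < \<delta> \<Longrightarrow> is_trajectory A \<beta>0 \<sigma> g p T y x \<Longrightarrow>
      dist (x (real k * T)) x0 \<le> C * dist y x0"
    and conv: "\<And>y x. y \<in> state_space \<Longrightarrow> dist y x0 < \<delta> \<Longrightarrow> is_trajectory A \<beta>0 \<sigma> g p T y x \<Longrightarrow>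
      (\<lambda>k. x (real k * T)) \<longlonglongrightarrow> x0"
  shows "loc_asym_stable A \<beta>0 \<sigma> g p T x0"
  unfolding loc_asym_stable_def
proof (intro conjI allI impI)
  fix V :: "(real \<times> real) set" assume "open V \<and> x0 \<in> V"
  then obtain \<epsilon> where "0 < \<epsilon>" and ball_V: "ball x0 \<epsilon> \<subseteq> V" using open_contains_ball by blast
  define r where "r = min \<delta> (\<epsilon> / (\<bar>C\<bar> + 1))"
  have "0 < r" using \<open>0 < \<delta>\<close> \<open>0 < \<epsilon>\<close> by (simp add: r_def)
  have "\<epsilon> / (\<bar>C\<bar> + 1) \<le> \<epsilon>" using \<open>0 < \<epsilon>\<close> by (simp add: divide_le_eq)
  then have "r \<le> \<epsilon>" by (simp add: r_def)
  have "\<bar>C\<bar> * r < \<epsilon>"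
  proof -
    have "\<bar>C\<bar> * r \<le> \<bar>C\<bar> * (\<epsilon> / (\<bar>C\<bar> + 1))" by (intro mult_left_mono) (auto simp: r_def)
    also have "\<dots> < \<epsilon>" using \<open>0 < \<epsilon>\<close> by (simp add: field_simps)
    finally show ?thesis .
  qed
  show "\<exists>W. open W \<and> x0 \<in> W \<and> W \<subseteq> V \<and>
      (\<forall>y \<in> W \<inter> state_space. \<forall>x. is_trajectory A \<beta>0 \<sigma> g p T y x \<longrightarrow> (\<forall>k::nat. x (real k * T) \<in> V))"
  proof (intro exI[of _ "ball x0 r"] conjI ballI allI impI)
    show "ball x0 r \<subseteq> V" using ball_V \<open>r \<le> \<epsilon>\<close> by auto
    fix y x k assume y: "y \<in> ball x0 r \<inter> state_space" and tr: "is_trajectory A \<beta>0 \<sigma> g p T y x"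
    then have "dist y x0 < r" by (simp add: dist_commute)
    then have "dist (x (real k * T)) x0 \<le> C * dist y x0" using bound y tr by (simp add: r_def)
    also have "\<dots> \<le> \<bar>C\<bar> * r" using \<open>dist y x0 < r\<close> by (intro mult_mono) auto
    finally show "x (real k * T) \<in> V" using \<open>\<bar>C\<bar> * r < \<epsilon>\<close> ball_V by (auto simp: dist_commute)
  qed (use \<open>0 < r\<close> in auto)
next
  show "\<exists>V. open V \<and> x0 \<in> V \<and>
      (\<forall>y \<in> V \<inter> state_space. \<forall>x. is_trajectory A \<beta>0 \<sigma> g p T y x \<longrightarrow> (\<lambda>k. x (real k * T)) \<longlonglongrightarrow> x0)"
    by (intro exI[of _ "ball x0 \<delta>"]) (use conv \<open>0 < \<delta>\<close> in \<open>auto simp: dist_commute\<close>)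
qed

lemma (in SI_params) SI_trajectoryI:
  "is_trajectory A \<beta>0 \<sigma> g p T y x \<Longrightarrow> y \<in> state_space \<Longrightarrow> SI_trajectory A \<beta>0 \<sigma> g p T y x"
  by unfold_locales

lemma (in SI_trajectory) attracted_to_trivial:
  assumes "0 < \<sigma> + g" "p1 A T < p" and near: "dist y (0, 0) < exp (- A * T) * (\<sigma> + g) / (2 * \<beta>0)"
  shows "dist (x (real k * T)) (0, 0) \<le> dist y (0, 0)" and "(\<lambda>k. x (real k * T)) \<longlonglongrightarrow> (0, 0)"
proof -
  define q r where "q = (1 - p) * exp (A * T)" and "r = exp (- ((\<sigma> + g) / 2) * T)"
  have "1 - p < exp (- A * T)" using assms(2) by (simp add: p1_def)
  then have "(1 - p) * exp (A * T) < exp (- A * T) * exp (A * T)" by (intro mult_strict_right_mono) auto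
  then have "q < 1" by (simp add: q_def flip: exp_add)
  have "0 \<le> q" using p_le_1 by (simp add: q_def)
  have "r < 1" using assms(1) T_pos by (simp add: r_def)
  have "fst y \<le> exp (- A * T) * (\<sigma> + g) / (2 * \<beta>0)"
    using norm_fst_le[of "fst y" "snd y"] near by (simp add: dist_origin)
  then have "\<beta>0 * fst y * exp (A * T) \<le> \<beta>0 * (exp (- A * T) * (\<sigma> + g) / (2 * \<beta>0)) * exp (A * T)"
    using \<beta>0_pos by (intro mult_right_mono mult_left_mono) auto
  also have "\<dots> = (\<sigma> + g) / 2" using \<beta>0_pos by (simp add: field_simps flip: exp_add)
  finally have decay: "S_at k \<le> q ^ k * fst y \<and> I_at k \<le> r ^ k * snd y" for k
    using geometric_decay_to_trivial \<open>q < 1\<close> unfolding q_def r_def by simp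
  have "q ^ k * fst y \<le> fst y" "r ^ k * snd y \<le> snd y"
    using \<open>0 \<le> q\<close> \<open>q < 1\<close> \<open>r < 1\<close> initial_nonneg by (auto simp: mult_left_le_one_le power_le_one r_def)
  then have "norm (S_at k, I_at k) \<le> norm (fst y, snd y)"
    using decay[of k] state_nonneg[of k] by (intro norm_Pair_mono) auto
  then show "dist (x (real k * T)) (0, 0) \<le> dist y (0, 0)" by (simp add: dist_origin)
  have "S_at \<longlonglongrightarrow> 0"
  proof (rule tendsto_sandwich[of "\<lambda>_. 0" _ _ "\<lambda>k. q ^ k * fst y"])
    show "(\<lambda>k. q ^ k * fst y) \<longlonglongrightarrow> 0"
      using \<open>0 \<le> q\<close> \<open>q < 1\<close> by (intro tendsto_mult_left_zero LIMSEQ_power_zero) auto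
  qed (use decay state_nonneg in auto)
  moreover have "I_at \<longlonglongrightarrow> 0"
  proof (rule tendsto_sandwich[of "\<lambda>_. 0" _ _ "\<lambda>k. r ^ k * snd y"])
    show "(\<lambda>k. r ^ k * snd y) \<longlonglongrightarrow> 0"
      using \<open>r < 1\<close> by (intro tendsto_mult_left_zero LIMSEQ_power_zero) (auto simp: r_def)
  qed (use decay state_nonneg in auto)
  ultimately show "(\<lambda>k. x (real k * T)) \<longlonglongrightarrow> (0, 0)" using tendsto_Pair by fastforce
qed

lemma (in SI_params) trivial_solution_stable:
  assumes "0 < \<sigma> + g" "p1 A T < p"
  shows "loc_asym_stable A \<beta>0 \<sigma> g p T (0, 0)"
proof (rule loc_asym_stableI[where C = 1])
  show "0 < exp (- A * T) * (\<sigma> + g) / (2 * \<beta>0)" using assms \<beta>0_pos by simp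
qed (use SI_trajectory.attracted_to_trivial[OF SI_trajectoryI assms] in auto)

locale SI_periodic = SI_params +
  assumes above_p2: "p2 A \<beta>0 \<sigma> g T < p" and below_p1: "p < p1 A T"
begin

text \<open>contraction and u_fix are the slope and the fixed point of the period map
  u \<mapsto> (1/A + (u - 1/A) e^(-AT)) / (1 - p) of u = 1/S when I = 0. Any rate in (contraction, 1)
  that dominates lyapunov_rate serves for the perturbed iteration; I_growth bounds the growth factor of
  I over a period while S \<le> 2 / u_fix, and gain is the resulting coefficient of I in the
  perturbation of the period map.\<close>

definition contraction :: real where "contraction = exp (- A * T) / (1 - p)"

definition u_fix :: real where "u_fix = (1 - exp (- A * T)) / (A * (1 - p - exp (- A * T)))"

definition lyapunov_rate :: real where
  "lyapunov_rate = (1 - p) powr \<beta>0 * exp ((\<beta>0 * A - (\<sigma> + g)) * T)"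

definition rate :: real where "rate = max ((1 + contraction) / 2) lyapunov_rate"

definition I_growth :: real where "I_growth = exp (\<beta>0 * max A (2 / u_fix) * T)"

definition gain :: real where
  "gain = \<beta>0 * I_growth * max (3 * u_fix / 2) (2 / A) / (A * (1 - p))"

lemma exp_less_1_minus_p: "exp (- A * T) < 1 - p"
  using below_p1 by (simp add: p1_def)

lemma p_less_1: "p < 1"
  using exp_less_1_minus_p by (smt (verit) exp_gt_zero)

lemma contraction_bounds: "0 \<le> contraction" "contraction < 1"
  using exp_less_1_minus_p p_less_1 by (simp_all add: contraction_def)

lemma u_fix_pos: "0 < u_fix"
  using exp_less_1_minus_p A_pos T_pos unfolding u_fix_def by (auto intro!: divide_pos_pos)

lemma u_fix_eq: "u_fix * (1 - p) = 1 / A + (u_fix - 1 / A) * exp (- A * T)"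
proof -
  have "u_fix * (1 - p - exp (- A * T)) = (1 - exp (- A * T)) / A"
    using exp_less_1_minus_p A_pos unfolding u_fix_def by simp
  then show ?thesis using A_pos by (simp add: field_simps)
qed

lemma Sper_0: "Sper A p T 0 = 1 / u_fix"
proof -
  define E where "E = exp (- A * T)"
  have exp_AT: "exp (A * T) = 1 / E" by (simp add: E_def exp_minus inverse_eq_divide)
  have "0 < E" "E < 1 - p" using exp_less_1_minus_p by (simp_all add: E_def)
  have "Sper A p T 0 = A * (exp (A * T) * (1 - p) - 1) / (exp (A * T) * (1 - p) - 1 + p * exp (A * T))"
    unfolding Sper_def Let_def by simp
  also have "\<dots> = A * ((1 - p - E) / E) / ((1 - E) / E)"
    unfolding exp_AT using \<open>0 < E\<close> by (simp add: field_simps)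
  also have "\<dots> = 1 / u_fix"
    unfolding u_fix_def E_def[symmetric] using \<open>0 < E\<close> by simp
  finally show ?thesis .
qed

lemma lyapunov_rate_bounds: "0 \<le> lyapunov_rate" "lyapunov_rate < 1"
proof -
  show "0 \<le> lyapunov_rate" by (simp add: lyapunov_rate_def)
  have "1 - p < exp (- (A - Scrit \<beta>0 \<sigma> g) * T)" using above_p2 by (simp add: p2_def)
  then have "(1 - p) powr \<beta>0 < exp (- (A - Scrit \<beta>0 \<sigma> g) * T) powr \<beta>0"
    using p_less_1 \<beta>0_pos by (intro powr_less_mono2) auto
  also have "\<dots> = exp (- (\<beta>0 * A - (\<sigma> + g)) * T)"
    unfolding powr_def Scrit_def using \<beta>0_pos by (simp add: field_simps)
  finally have "lyapunov_rate < exp (- (\<beta>0 * A - (\<sigma> + g)) * T) * exp ((\<beta>0 * A - (\<sigma> + g)) * T)"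
    unfolding lyapunov_rate_def by (intro mult_strict_right_mono) auto
  then show "lyapunov_rate < 1" by (simp add: algebra_simps flip: exp_add)
qed

lemma rate_bounds: "contraction < rate" "lyapunov_rate \<le> rate" "rate < 1" "0 \<le> rate"
  using contraction_bounds lyapunov_rate_bounds by (auto simp: rate_def less_max_iff_disj le_max_iff_disj)

lemma gain_nonneg: "0 \<le> gain"
  using A_pos \<beta>0_pos p_less_1 u_fix_pos unfolding gain_def I_growth_def
  by (auto intro!: divide_nonneg_pos mult_nonneg_nonneg simp: le_max_iff_disj)

end

locale SI_periodic_trajectory = SI_periodic + SI_trajectory
begin

lemma inv_S_error_step:
  assumes "0 < S_at n" "\<bar>1 / S_at n - u_fix\<bar> \<le> u_fix / 2" "\<beta>0 * I_growth * I_at n \<le> A / 2"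
  shows "contraction * (1 / S_at n - u_fix) \<le> 1 / S_at (Suc n) - u_fix"
    and "1 / S_at (Suc n) - u_fix \<le> contraction * (1 / S_at n - u_fix) + gain * I_at n"
proof -
  define E where "E = exp (- A * T)"
  define J where "J = I_at n * exp (\<beta>0 * max A (S_at n) * T)"
  define d where "d = \<beta>0 * J * max (1 / S_at n) (2 / A) / A"
  have I_nonneg: "0 \<le> I_at n" using state_nonneg by blast
  note S_bounds = inverse_close_bounds[OF assms(1) u_fix_pos assms(2)]
  have "exp (\<beta>0 * max A (S_at n) * T) \<le> I_growth"
    unfolding I_growth_def using S_bounds \<beta>0_pos T_pos by (auto intro!: mult_right_mono)
  then have "J \<le> I_at n * I_growth" unfolding J_def using I_nonneg by (rule mult_left_mono)
  then have "\<beta>0 * J \<le> \<beta>0 * I_growth * I_at n" using \<beta>0_pos by (simp add: mult_left_mono mult_ac)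
  then have "\<beta>0 * J \<le> A / 2" using assms(3) by simp
  note bounds = inv_S_at_Suc_bounds[OF p_less_1 assms(1)]
  have lower: "(1 / S_at n - 1 / A) * E \<le> (1 - p) / S_at (Suc n) - 1 / A"
    using bounds(1) by (simp add: E_def)
  have upper: "(1 - p) / S_at (Suc n) - 1 / A \<le> (1 / S_at n - 1 / A) * E + d"
    using bounds(2) \<open>\<beta>0 * J \<le> A / 2\<close> by (simp add: E_def J_def d_def)
  have "d \<le> \<beta>0 * (I_at n * I_growth) * max (3 * u_fix / 2) (2 / A) / A"
    unfolding d_def using \<open>J \<le> I_at n * I_growth\<close> S_bounds(3) \<beta>0_pos A_pos I_nonneg
    by (intro divide_right_mono mult_mono) (auto simp: le_max_iff_disj J_def I_growth_def)
  also have "\<dots> = (1 - p) * (gain * I_at n)"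
    using p_less_1 A_pos by (simp add: gain_def field_simps)
  finally have d_le: "d \<le> (1 - p) * (gain * I_at n)" .
  have "(1 - p) * (1 / S_at (Suc n) - u_fix) = ((1 - p) / S_at (Suc n) - 1 / A) - (u_fix - 1 / A) * E"
    using u_fix_eq by (simp add: E_def algebra_simps)
  moreover have "(1 - p) * (contraction * (1 / S_at n - u_fix)) = (1 / S_at n - 1 / A) * E - (u_fix - 1 / A) * E"
  proof -
    have E_eq: "(1 - p) * contraction = E" using p_less_1 by (simp add: contraction_def E_def)
    have "(1 - p) * (contraction * (1 / S_at n - u_fix)) = ((1 - p) * contraction) * (1 / S_at n - u_fix)"
      by (simp only: mult.assoc)
    then show ?thesis unfolding E_eq by (simp add: algebra_simps)
  qed
  ultimately have "(1 - p) * (contraction * (1 / S_at n - u_fix)) \<le> (1 - p) * (1 / S_at (Suc n) - u_fix)"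
    and "(1 - p) * (1 / S_at (Suc n) - u_fix) \<le> (1 - p) * (contraction * (1 / S_at n - u_fix) + gain * I_at n)"
    using lower upper d_le by (simp_all add: algebra_simps)
  then show "contraction * (1 / S_at n - u_fix) \<le> 1 / S_at (Suc n) - u_fix"
    and "1 / S_at (Suc n) - u_fix \<le> contraction * (1 / S_at n - u_fix) + gain * I_at n"
    using p_less_1 by (simp_all add: mult_le_cancel_left_pos)
qed

lemma lyapunov_geometric:
  assumes "0 < fst y"
  shows "I_at n * S_at n powr \<beta>0 \<le> lyapunov_rate ^ n * (snd y * fst y powr \<beta>0)"
proof (induction n)
  case 0
  then show ?case by (simp add: initial)
next
  case (Suc n)
  have "I_at (Suc n) * S_at (Suc n) powr \<beta>0 \<le> lyapunov_rate * (I_at n * S_at n powr \<beta>0)"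
    using lyapunov_step[OF p_less_1 S_at_pos[OF p_less_1 assms]] by (simp add: lyapunov_rate_def)
  also have "\<dots> \<le> lyapunov_rate * (lyapunov_rate ^ n * (snd y * fst y powr \<beta>0))"
    using Suc.IH lyapunov_rate_bounds by (intro mult_left_mono) auto
  finally show ?case by simp
qed

lemma I_at_le_near_u_fix:
  assumes "0 < fst y" "\<bar>1 / fst y - u_fix\<bar> \<le> u_fix / 2" "\<bar>1 / S_at n - u_fix\<bar> \<le> u_fix / 2"
  shows "I_at n \<le> 3 powr \<beta>0 * lyapunov_rate ^ n * snd y"
proof -
  have "0 < S_at n" by (rule S_at_pos[OF p_less_1 assms(1)])
  have "fst y \<le> 2 / u_fix" "2 / (3 * u_fix) \<le> S_at n"
    using inverse_close_bounds[OF assms(1) u_fix_pos assms(2)]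
      inverse_close_bounds[OF \<open>0 < S_at n\<close> u_fix_pos assms(3)] by simp_all
  moreover have "2 / u_fix = 3 * (2 / (3 * u_fix))" by simp
  ultimately have "fst y \<le> 3 * S_at n" by linarith
  then have "fst y powr \<beta>0 \<le> 3 powr \<beta>0 * S_at n powr \<beta>0"
    using assms(1) \<beta>0_pos \<open>0 < S_at n\<close> by (simp add: powr_mono2 flip: powr_mult)
  then have "I_at n * S_at n powr \<beta>0 \<le> (3 powr \<beta>0 * lyapunov_rate ^ n * snd y) * S_at n powr \<beta>0"
    using lyapunov_geometric[OF assms(1), of n] lyapunov_rate_bounds initial_nonneg(2)
    by (smt (verit, best) mult.assoc mult.left_commute mult_left_mono zero_le_power)
  then show ?thesis using \<open>0 < S_at n\<close> by simp
qed

text \<open>The initial error of u plus all later perturbations, summed as a geometric series of ratio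
  contraction / rate.\<close>

definition error_budget :: real where
  "error_budget = \<bar>1 / fst y - u_fix\<bar> + gain * 3 powr \<beta>0 * snd y / (rate - contraction)"

lemma error_budget_bounds:
  "\<bar>1 / fst y - u_fix\<bar> \<le> error_budget" "gain * 3 powr \<beta>0 * snd y \<le> error_budget * (rate - contraction)"
proof -
  have "0 \<le> gain * 3 powr \<beta>0 * snd y / (rate - contraction)"
    using gain_nonneg rate_bounds initial_nonneg by simp
  then show "\<bar>1 / fst y - u_fix\<bar> \<le> error_budget" by (simp add: error_budget_def)
  have "gain * 3 powr \<beta>0 * snd y / (rate - contraction) \<le> error_budget"
    by (simp add: error_budget_def)
  with rate_bounds(1) show "gain * 3 powr \<beta>0 * snd y \<le> error_budget * (rate - contraction)"
    by (simp add: pos_divide_le_eq)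
qed

lemma error_budget_le:
  assumes "dist y (1 / u_fix, 0) \<le> r" "r < 1 / (2 * u_fix)"
  shows "0 < fst y" "error_budget \<le> (2 * u_fix\<^sup>2 + gain * 3 powr \<beta>0 / (rate - contraction)) * r"
proof -
  have "\<bar>fst y - 1 / u_fix\<bar> \<le> r" "snd y \<le> r"
    using dist_fst_le[of y "(1 / u_fix, 0)"] dist_snd_le[of y "(1 / u_fix, 0)"] assms(1)
    by (simp_all add: dist_real_def)
  with assms(2) have "1 / u_fix / 2 \<le> fst y" by (simp add: abs_le_iff)
  then show "0 < fst y" using u_fix_pos by (smt (verit) divide_pos_pos)
  have "\<bar>1 / fst y - 1 / (1 / u_fix)\<bar> \<le> 2 * \<bar>fst y - 1 / u_fix\<bar> / (1 / u_fix)\<^sup>2"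
    using \<open>1 / u_fix / 2 \<le> fst y\<close> u_fix_pos by (intro abs_inverse_diff_le) auto
  also have "\<dots> = 2 * u_fix\<^sup>2 * \<bar>fst y - 1 / u_fix\<bar>" by (simp add: power_divide)
  also have "\<dots> \<le> 2 * u_fix\<^sup>2 * r" using \<open>\<bar>fst y - 1 / u_fix\<bar> \<le> r\<close> by (simp add: mult_left_mono)
  finally have "\<bar>1 / fst y - u_fix\<bar> \<le> 2 * u_fix\<^sup>2 * r" by simp
  moreover have "gain * 3 powr \<beta>0 * snd y / (rate - contraction) \<le> gain * 3 powr \<beta>0 / (rate - contraction) * r"
    using \<open>snd y \<le> r\<close> gain_nonneg rate_bounds by (simp add: divide_right_mono mult_left_mono)
  ultimately show "error_budget \<le> (2 * u_fix\<^sup>2 + gain * 3 powr \<beta>0 / (rate - contraction)) * r"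
    unfolding error_budget_def by (simp add: algebra_simps)
qed

lemma inv_S_error_decay:
  assumes "0 < fst y" "error_budget \<le> u_fix / 2"
    and small: "\<beta>0 * I_growth * (3 powr \<beta>0 * snd y) \<le> A / 2"
  shows "\<bar>1 / S_at n - u_fix\<bar> \<le> error_budget * rate ^ n"
proof (induction n)
  case 0
  then show ?case using error_budget_bounds(1) by (simp add: initial)
next
  case (Suc n)
  have "0 \<le> error_budget" using error_budget_bounds(1) by linarith
  have "0 \<le> rate ^ n" "rate ^ n \<le> 1" using rate_bounds by (simp_all add: power_le_one)
  then have "error_budget * rate ^ n \<le> error_budget" using \<open>0 \<le> error_budget\<close> by (simp add: mult_left_le)
  then have close: "\<bar>1 / S_at n - u_fix\<bar> \<le> u_fix / 2" using Suc.IH assms(2) by linarith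
  have init_close: "\<bar>1 / fst y - u_fix\<bar> \<le> u_fix / 2" using error_budget_bounds(1) assms(2) by linarith
  have "lyapunov_rate ^ n \<le> rate ^ n" using lyapunov_rate_bounds rate_bounds by (simp add: power_mono)
  then have "3 powr \<beta>0 * lyapunov_rate ^ n * snd y \<le> 3 powr \<beta>0 * rate ^ n * snd y"
    using initial_nonneg by (intro mult_right_mono mult_left_mono) auto
  then have I_le: "I_at n \<le> 3 powr \<beta>0 * rate ^ n * snd y"
    using I_at_le_near_u_fix[OF assms(1) init_close close] by linarith
  have "3 powr \<beta>0 * rate ^ n * snd y \<le> 3 powr \<beta>0 * snd y"
    using \<open>0 \<le> rate ^ n\<close> \<open>rate ^ n \<le> 1\<close> initial_nonneg by (simp add: mult_left_le_one_le)
  with I_le have "I_at n \<le> 3 powr \<beta>0 * snd y" by linarith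
  moreover have "0 \<le> \<beta>0 * I_growth" using \<beta>0_pos by (simp add: I_growth_def)
  ultimately have "\<beta>0 * I_growth * I_at n \<le> \<beta>0 * I_growth * (3 powr \<beta>0 * snd y)"
    by (rule mult_left_mono)
  with small have "\<beta>0 * I_growth * I_at n \<le> A / 2" by linarith
  note step = inv_S_error_step[OF S_at_pos[OF p_less_1 assms(1)] close this]
  have "gain * I_at n \<le> gain * (3 powr \<beta>0 * rate ^ n * snd y)"
    using I_le gain_nonneg by (rule mult_left_mono)
  also have "\<dots> = (gain * 3 powr \<beta>0 * snd y) * rate ^ n" by (simp only: mult_ac)
  also have "\<dots> \<le> error_budget * (rate - contraction) * rate ^ n"
    using error_budget_bounds(2) \<open>0 \<le> rate ^ n\<close> by (rule mult_right_mono)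
  finally have "\<bar>1 / S_at (Suc n) - u_fix\<bar> \<le> error_budget * rate ^ n * rate"
    by (rule abs_le_of_perturbed_contraction[OF contraction_bounds(1) step Suc.IH _ \<open>0 \<le> rate ^ n\<close>])
  then show ?case by (simp add: mult_ac)
qed

lemma near_periodic_bounds:
  assumes "0 < fst y" "error_budget \<le> u_fix / 2"
    and "\<beta>0 * I_growth * (3 powr \<beta>0 * snd y) \<le> A / 2"
  shows "\<bar>S_at k - 1 / u_fix\<bar> \<le> 2 * error_budget * rate ^ k / u_fix\<^sup>2"
    and "0 \<le> I_at k" "I_at k \<le> 3 powr \<beta>0 * lyapunov_rate ^ k * snd y"
proof -
  note error = inv_S_error_decay[OF assms]
  have "0 \<le> error_budget" using error_budget_bounds(1) by linarith
  then have "error_budget * rate ^ k \<le> error_budget"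
    using rate_bounds by (simp add: mult_left_le power_le_one)
  then have close: "\<bar>1 / S_at k - u_fix\<bar> \<le> u_fix / 2" using error[of k] assms(2) by linarith
  have "\<bar>1 / (1 / S_at k) - 1 / u_fix\<bar> \<le> 2 * \<bar>1 / S_at k - u_fix\<bar> / u_fix\<^sup>2"
  proof (rule abs_inverse_diff_le[OF u_fix_pos])
    show "u_fix / 2 \<le> 1 / S_at k" using abs_le_D2[OF close] by linarith
  qed
  also have "\<dots> \<le> 2 * error_budget * rate ^ k / u_fix\<^sup>2"
    using error[of k] by (simp add: divide_right_mono)
  finally show "\<bar>S_at k - 1 / u_fix\<bar> \<le> 2 * error_budget * rate ^ k / u_fix\<^sup>2" by simp
  have "\<bar>1 / fst y - u_fix\<bar> \<le> u_fix / 2" using error_budget_bounds(1) assms(2) by linarith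
  from I_at_le_near_u_fix[OF assms(1) this close]
  show "I_at k \<le> 3 powr \<beta>0 * lyapunov_rate ^ k * snd y" .
  show "0 \<le> I_at k" using state_nonneg by blast
qed

lemma attracted_to_periodic:
  assumes "0 < fst y" "error_budget \<le> u_fix / 2"
    and "\<beta>0 * I_growth * (3 powr \<beta>0 * snd y) \<le> A / 2"
  shows "dist (x (real k * T)) (1 / u_fix, 0) \<le> 2 * error_budget / u_fix\<^sup>2 + 3 powr \<beta>0 * snd y"
    and "(\<lambda>k. x (real k * T)) \<longlonglongrightarrow> (1 / u_fix, 0)"
proof -
  note bounds = near_periodic_bounds[OF assms]
  have "0 \<le> error_budget" using error_budget_bounds(1) by linarith
  then have "2 * error_budget * rate ^ k / u_fix\<^sup>2 \<le> 2 * error_budget / u_fix\<^sup>2"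
    using rate_bounds by (simp add: divide_right_mono mult_left_le power_le_one)
  moreover have "3 powr \<beta>0 * lyapunov_rate ^ k * snd y \<le> 3 powr \<beta>0 * snd y"
    using lyapunov_rate_bounds initial_nonneg by (simp add: mult_left_le_one_le power_le_one)
  moreover have "dist (x (real k * T)) (1 / u_fix, 0) \<le> \<bar>S_at k - 1 / u_fix\<bar> + \<bar>I_at k - 0\<bar>"
    using dist_Pair_le_sum_abs[of "S_at k" "I_at k" "1 / u_fix" 0] by simp
  ultimately show "dist (x (real k * T)) (1 / u_fix, 0) \<le> 2 * error_budget / u_fix\<^sup>2 + 3 powr \<beta>0 * snd y"
    using bounds[of k] by linarith
  have "(\<lambda>k. 2 * error_budget * rate ^ k / u_fix\<^sup>2) \<longlonglongrightarrow> 0"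
    using rate_bounds by (intro tendsto_divide_zero tendsto_mult_right_zero LIMSEQ_power_zero) auto
  from tendsto_sandwich[OF _ _ tendsto_const this]
  have "(\<lambda>k. \<bar>S_at k - 1 / u_fix\<bar>) \<longlonglongrightarrow> 0" using bounds(1) by (auto intro: always_eventually)
  then have S_lim: "S_at \<longlonglongrightarrow> 1 / u_fix" by (simp add: LIM_zero_cancel tendsto_rabs_zero_iff)
  have "(\<lambda>k. 3 powr \<beta>0 * lyapunov_rate ^ k * snd y) \<longlonglongrightarrow> 0"
    using lyapunov_rate_bounds by (intro tendsto_mult_left_zero tendsto_mult_right_zero LIMSEQ_power_zero) auto
  from tendsto_sandwich[OF _ _ tendsto_const this]
  have I_lim: "I_at \<longlonglongrightarrow> 0" using bounds(2,3) by (auto intro: always_eventually)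
  show "(\<lambda>k. x (real k * T)) \<longlonglongrightarrow> (1 / u_fix, 0)"
    using tendsto_Pair[OF S_lim I_lim] by simp
qed

end

context SI_periodic
begin

lemma SI_periodic_trajectoryI:
  "is_trajectory A \<beta>0 \<sigma> g p T y x \<Longrightarrow> y \<in> state_space \<Longrightarrow> SI_periodic_trajectory A \<beta>0 \<sigma> g p T y x"
  unfolding SI_periodic_trajectory_def using SI_periodic_axioms SI_trajectoryI by blast

lemma periodic_solution_stable: "loc_asym_stable A \<beta>0 \<sigma> g p T (Sper A p T 0, 0)"
proof -
  define x0 :: "real \<times> real" where "x0 = (1 / u_fix, 0)"
  define C where "C = 2 * u_fix\<^sup>2 + gain * 3 powr \<beta>0 / (rate - contraction)"
  define \<delta> where "\<delta> = min (1 / (2 * u_fix)) (min (u_fix / (2 * C)) (A / (2 * \<beta>0 * I_growth * 3 powr \<beta>0)))"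
  have "0 < C" unfolding C_def using u_fix_pos gain_nonneg rate_bounds by (auto intro!: add_pos_nonneg)
  have "0 < \<delta>" unfolding \<delta>_def I_growth_def using u_fix_pos \<open>0 < C\<close> A_pos \<beta>0_pos by auto
  have bound: "dist (x (real k * T)) x0 \<le> (2 * C / u_fix\<^sup>2 + 3 powr \<beta>0) * dist y x0"
    and conv: "(\<lambda>k. x (real k * T)) \<longlonglongrightarrow> x0"
    if y: "y \<in> state_space" "dist y x0 < \<delta>" and tr: "is_trajectory A \<beta>0 \<sigma> g p T y x" for y x k
  proof -
    interpret SI_periodic_trajectory A \<beta>0 \<sigma> g p T y x by (rule SI_periodic_trajectoryI[OF tr y(1)])
    define r where "r = dist y x0"
    have "snd y \<le> r" using dist_snd_le[of y x0] by (simp add: r_def x0_def dist_real_def)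
    have "r < 1 / (2 * u_fix)" using y(2) by (simp add: r_def \<delta>_def)
    note budget = error_budget_le[OF _ this, folded x0_def C_def, OF r_def[symmetric, THEN eq_refl]]
    have "C * r \<le> C * (u_fix / (2 * C))"
      using y(2) \<open>0 < C\<close> by (intro mult_left_mono) (auto simp: r_def \<delta>_def)
    with budget(2) \<open>0 < C\<close> have "error_budget \<le> u_fix / 2" by simp
    have "\<beta>0 * I_growth * (3 powr \<beta>0 * snd y) \<le> \<beta>0 * I_growth * (3 powr \<beta>0 * \<delta>)"
      using \<open>snd y \<le> r\<close> y(2) \<beta>0_pos by (intro mult_left_mono) (auto simp: r_def I_growth_def)
    also have "\<dots> \<le> \<beta>0 * I_growth * (3 powr \<beta>0 * (A / (2 * \<beta>0 * I_growth * 3 powr \<beta>0)))"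
      using \<beta>0_pos by (intro mult_left_mono) (auto simp: \<delta>_def I_growth_def)
    also have "\<dots> = A / 2" using \<beta>0_pos by (simp add: I_growth_def)
    finally have "\<beta>0 * I_growth * (3 powr \<beta>0 * snd y) \<le> A / 2" .
    note attracted = attracted_to_periodic[OF budget(1) \<open>error_budget \<le> u_fix / 2\<close> this]
    have "2 * error_budget / u_fix\<^sup>2 + 3 powr \<beta>0 * snd y \<le> 2 * (C * r) / u_fix\<^sup>2 + 3 powr \<beta>0 * r"
      using budget(2) \<open>snd y \<le> r\<close> by (intro add_mono divide_right_mono mult_left_mono) auto
    then show "dist (x (real k * T)) x0 \<le> (2 * C / u_fix\<^sup>2 + 3 powr \<beta>0) * dist y x0"
      using attracted(1)[of k] by (simp add: x0_def r_def algebra_simps)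
    show "(\<lambda>k. x (real k * T)) \<longlonglongrightarrow> x0" using attracted(2) by (simp add: x0_def)
  qed
  show ?thesis
    unfolding Sper_0 x0_def[symmetric] by (rule loc_asym_stableI[OF \<open>0 < \<delta>\<close>]) (fact bound conv)+
qed

end

theorem proposition9:
  fixes A \<beta>0 \<sigma> g p T :: real
  assumes "0 < A" "A \<le> 1" "0 < \<beta>0" "0 \<le> \<sigma>" "0 \<le> g" "0 < \<sigma> + g"
    and "0 \<le> p" "p \<le> 1" "0 < T"
  shows "(p > p1 A T \<longrightarrow> loc_asym_stable A \<beta>0 \<sigma> g p T (0, 0)) \<and>
         (p2 A \<beta>0 \<sigma> g T < p \<and> p < p1 A T \<longrightarrow>
            loc_asym_stable A \<beta>0 \<sigma> g p T (Sper A p T 0, 0))"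
proof -
  interpret SI_params A \<beta>0 \<sigma> g p T using assms by unfold_locales auto
  show ?thesis
  proof (intro conjI impI)
    show "p1 A T < p \<Longrightarrow> loc_asym_stable A \<beta>0 \<sigma> g p T (0, 0)"
      using trivial_solution_stable[OF \<open>0 < \<sigma> + g\<close>] by blast
    assume "p2 A \<beta>0 \<sigma> g T < p \<and> p < p1 A T"
    then interpret SI_periodic A \<beta>0 \<sigma> g p T by unfold_locales auto
    show "loc_asym_stable A \<beta>0 \<sigma> g p T (Sper A p T 0, 0)" by (rule periodic_solution_stable)
  qed
qed

end
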